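(* Consider the following market. There are $n$ agents $[n]=\{1,\dots,n\}$ and a seller with an unlimited supply of an identical good (at most one copy per agent, zero production cost). Each agent $i$ has a private valuation function $v_i:2^{[n]}\to\mathbb{R}$ assigning a value to every possible winning set $S\subseteq[n]$, satisfying: $v_i(S)\ge 0$; $v_i(S)=0$ if $i\notin S$; $v_i(S)\le v_i(R)$ whenever $S\subseteq R$; and $v_i(S\cup R)\le v_i(S)+v_i(R)$ for all $S,R\subseteq[n]$ with $i\in S\cap R$. Agents report bid functions $b_i:2^{[n]}\to\mathbb{R}_{\ge 0}$ (possibly different from $v_i$). Define the mechanism $\mathcal{M}$ as follows. 1. Independently and uniformly at random put every agent into one of three sets $A,B,C$. 2. For $X\in\{A,B\}$ let $r_X(C)=\max\{c\cdot|T| : c\ge 0,\ T\subseteq C,\ b_i(T\cup X)\ge c \text{ for all } i\in T\}$, and let $r(C)=\max\{r_A(C),r_B(C)\}$. 3. Give the good to every agent of $A$ for free (price $0$). 4. Run the following cost-sharing procedure with $r=r(C)$, $X=B$, $Y=A$: set $S\leftarrow X$; repeat: let $T=\{i\in S : b_i(S\cup Y)<r/|S|\}$ and set $S\leftarrow S\setminus T$, until $T=\emptyset$. If at the end $S\neq\emptyset$, sell the good to every agent of $S$ at price $r/|S|$. Agents of $C$ and agents of $B$ not sold the good receive nothing and pay nothing. Then $\mathcal{M}$ is universally truthful.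
   Context: For a deterministic mechanism that selects a winning set $S$ and charges each $i\in S$ a price $p_i$ (agents outside $S$ pay $0$), the utility of agent $i$ is $v_i(S)-p_i$ if $i\in S$ and $0$ otherwise. A deterministic mechanism is truthful if for every agent $i$ and every fixed reports of the other agents, reporting $b_i=v_i$ maximizes agent $i$'s utility over all possible reports $b_i$. A randomized mechanism is universally truthful if it is a probability distribution over deterministic truthful mechanisms. *)

theory Defs
  imports "HOL-Probability.Probability"
begin

text \<open>Agents are 1..n. A bid profile / valuation profile maps each agent to a
function on sets of agents.\<close>

type_synonym profile = "nat \<Rightarrow> nat set \<Rightarrow> real"
type_synonym outcome = "nat set \<times> (nat \<Rightarrow> real)"   (* winning set, prices *)
type_synonym mechanism = "profile \<Rightarrow> outcome"

definition valuation :: "nat \<Rightarrow> nat \<Rightarrow> (nat set \<Rightarrow> real) \<Rightarrow> bool" where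
  "valuation n i v \<longleftrightarrow>
     (\<forall>S. S \<subseteq> {1..n} \<longrightarrow> v S \<ge> 0) \<and>
     (\<forall>S. S \<subseteq> {1..n} \<longrightarrow> i \<notin> S \<longrightarrow> v S = 0) \<and>
     (\<forall>S R. S \<subseteq> R \<longrightarrow> R \<subseteq> {1..n} \<longrightarrow> v S \<le> v R) \<and>
     (\<forall>S R. S \<subseteq> {1..n} \<longrightarrow> R \<subseteq> {1..n} \<longrightarrow> i \<in> S \<inter> R \<longrightarrow> v (S \<union> R) \<le> v S + v R)"

definition valid_bid :: "nat \<Rightarrow> (nat set \<Rightarrow> real) \<Rightarrow> bool" where
  "valid_bid n b \<longleftrightarrow> (\<forall>S. S \<subseteq> {1..n} \<longrightarrow> b S \<ge> 0)"

definition utility :: "nat \<Rightarrow> (nat set \<Rightarrow> real) \<Rightarrow> outcome \<Rightarrow> real" where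
  "utility i v out = (if i \<in> fst out then v (fst out) - snd out i else 0)"

definition truthful :: "nat \<Rightarrow> mechanism \<Rightarrow> bool" where
  "truthful n M \<longleftrightarrow>
     (\<forall>i \<in> {1..n}. \<forall>v b b'.
        valuation n i v \<and> (\<forall>j \<in> {1..n}. valid_bid n (b j)) \<and> valid_bid n b' \<longrightarrow>
        utility i v (M (b(i := b'))) \<le> utility i v (M (b(i := v))))"

definition universally_truthful :: "nat \<Rightarrow> mechanism pmf \<Rightarrow> bool" where
  "universally_truthful n D \<longleftrightarrow> (\<forall>M \<in> set_pmf D. truthful n M)"

datatype part = PA | PB | PC

text \<open>r_X(C) = max { c |T| : c \<ge> 0, T \<subseteq> C, b_i(T \<union> X) \<ge> c for all i \<in> T }
  (the maximum exists; we write it as Sup).\<close>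
definition r_X :: "profile \<Rightarrow> nat set \<Rightarrow> nat set \<Rightarrow> real" where
  "r_X b X C = Sup {c * real (card T) | c T. c \<ge> 0 \<and> T \<subseteq> C \<and> (\<forall>i \<in> T. b i (T \<union> X) \<ge> c)}"

definition r_C :: "profile \<Rightarrow> nat set \<Rightarrow> nat set \<Rightarrow> nat set \<Rightarrow> real" where
  "r_C b A B C = max (r_X b A C) (r_X b B C)"

function cs_loop :: "real \<Rightarrow> nat set \<Rightarrow> profile \<Rightarrow> nat set \<Rightarrow> nat set" where
  "cs_loop r Y b S =
     (let T = {i \<in> S. b i (S \<union> Y) < r / real (card S)} in
      if T = {} \<or> infinite S then S else cs_loop r Y b (S - T))"
  by pat_completeness auto
termination
  apply (relation "Wellfounded.measure (\<lambda>(r, Y, b, S). card S)")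
   apply simp
  apply clarsimp
  apply (rule psubset_card_mono)
   apply auto
  done

definition part_set :: "nat \<Rightarrow> (nat \<Rightarrow> part) \<Rightarrow> part \<Rightarrow> nat set" where
  "part_set n \<sigma> p = {i \<in> {1..n}. \<sigma> i = p}"

definition det_mech :: "nat \<Rightarrow> (nat \<Rightarrow> part) \<Rightarrow> mechanism" where
  "det_mech n \<sigma> b =
     (let A = part_set n \<sigma> PA; B = part_set n \<sigma> PB; C = part_set n \<sigma> PC;
          r = r_C b A B C;
          S = cs_loop r A b B
      in if S \<noteq> {} then (A \<union> S, \<lambda>i. if i \<in> S then r / real (card S) else 0)
         else (A, \<lambda>i. 0))"

text \<open>Each agent independently and uniformly in A, B or C: uniform over all
  assignments {1..n} \<rightarrow> {A,B,C}.\<close>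
definition assignments :: "nat \<Rightarrow> (nat \<Rightarrow> part) set" where
  "assignments n = PiE {1..n} (\<lambda>_. {PA, PB, PC})"

definition mech_M :: "nat \<Rightarrow> mechanism pmf" where
  "mech_M n = map_pmf (det_mech n) (pmf_of_set (assignments n))"

end

theory Submission
  imports Defs
begin

text \<open>Every partition gives a truthful mechanism. Agents of C never win. The outcome does
  not depend on the bids of agents of A, since r(C) only reads bids of C and the cost-sharing
  procedure only bids of B. For an agent i of B, run the procedure on her true and on her
  deviating bid in parallel: the runs agree until the first round S' in which i is treated
  differently. If only the deviation drops her, she gets nothing; if only the truthful run drops
  her, then v(A \<union> S') < r/|S'| and the deviating run ends in some F \<subseteq> S', so by monotonicity
  her utility v(A \<union> F) - r/|F| is negative. Under truthful bidding every survivor's share is at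
  most her value, so her utility is nonnegative.\<close>

declare cs_loop.simps[simp del]

lemma cs_loop_stop:
  assumes "{j \<in> S. b j (S \<union> Y) < r / real (card S)} = {}"
  shows "cs_loop r Y b S = S"
  using assms by (subst cs_loop.simps) (simp add: Let_def)

lemma cs_loop_step:
  assumes "finite S" "{j \<in> S. b j (S \<union> Y) < r / real (card S)} \<noteq> {}"
  shows "cs_loop r Y b S = cs_loop r Y b (S - {j \<in> S. b j (S \<union> Y) < r / real (card S)})"
  using assms by (subst cs_loop.simps) (simp only: Let_def if_False simp_thms)

lemma cs_loop_subset: "cs_loop r Y b S \<subseteq> S"
proof (induction r Y b S rule: cs_loop.induct)
  case (1 r Y b S)
  then show ?case by (subst cs_loop.simps) (auto simp: Let_def)
qed

lemma cs_loop_bid_ge_share: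
  assumes "finite S" "j \<in> cs_loop r Y b S"
  shows "r / card (cs_loop r Y b S) \<le> b j (cs_loop r Y b S \<union> Y)"
  using assms
proof (induction r Y b S rule: cs_loop.induct)
  case (1 r Y b S)
  define T where "T = {i \<in> S. b i (S \<union> Y) < r / real (card S)}"
  show ?case
  proof (cases "T = {}")
    case True
    then have "cs_loop r Y b S = S" using cs_loop_stop T_def by blast
    then show ?thesis using "1.prems" True unfolding T_def by auto
  next
    case False
    then have "cs_loop r Y b S = cs_loop r Y b (S - T)"
      by (rule cs_loop_step[of S b Y r, OF "1.prems"(1), folded T_def])
    then show ?thesis using "1.IH"[OF T_def] False "1.prems" by auto
  qed
qed

lemma cs_loop_cong:
  assumes "\<forall>j\<in>S. b1 j = b2 j"
  shows "cs_loop r Y b1 S = cs_loop r Y b2 S"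
  using assms
proof (induction r Y b1 S rule: cs_loop.induct)
  case (1 r Y b1 S)
  define T where "T = {i \<in> S. b1 i (S \<union> Y) < r / real (card S)}"
  have T2: "T = {i \<in> S. b2 i (S \<union> Y) < r / real (card S)}" using "1.prems" unfolding T_def by auto
  show ?case
  proof (cases "T = {} \<or> infinite S")
    case True
    then show ?thesis by (subst (1 2) cs_loop.simps) (simp add: Let_def T_def[symmetric] T2[symmetric])
  next
    case False
    then have fin: "finite S" and ne: "T \<noteq> {}" by auto
    have "cs_loop r Y b1 (S - T) = cs_loop r Y b2 (S - T)" using "1.IH"[OF T_def False] "1.prems" by auto
    then show ?thesis using cs_loop_step[of S b1 Y r, OF fin ne[unfolded T_def], folded T_def]
      cs_loop_step[of S b2 Y r, OF fin ne[unfolded T2], folded T2] by simp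
  qed
qed

lemma cs_loop_deviation:
  assumes "\<forall>j. j \<noteq> i \<longrightarrow> b1 j = b2 j" "b1 i = v"
  shows "cs_loop r Y b1 S = cs_loop r Y b2 S \<or> i \<notin> cs_loop r Y b2 S \<or>
    (\<exists>S'. cs_loop r Y b2 S \<subseteq> S' \<and> S' \<subseteq> S \<and> i \<in> S' \<and> v (S' \<union> Y) < r / card S')"
  using assms
proof (induction r Y b1 S rule: cs_loop.induct)
  case (1 r Y b1 S)
  define T1 where "T1 = {j \<in> S. b1 j (S \<union> Y) < r / real (card S)}"
  define T2 where "T2 = {j \<in> S. b2 j (S \<union> Y) < r / real (card S)}"
  show ?case
  proof (cases "finite S")
    case False
    then show ?thesis by (subst (1 2) cs_loop.simps) simp
  next
    case fin: True
    have "T1 = T2" if "i \<in> T1 \<longleftrightarrow> i \<in> T2"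
      using "1.prems"(1) that unfolding T1_def T2_def by auto
    then consider "T1 = T2" | "i \<in> T1" "i \<notin> T2" | "i \<in> T2" "i \<notin> T1"
      by blast
    then show ?thesis
    proof cases
      case 1
      show ?thesis
      proof (cases "T1 = {}")
        case True
        then show ?thesis
          using cs_loop_stop[of S b1 Y r, OF True[unfolded T1_def]]
            cs_loop_stop[of S b2 Y r, OF True[unfolded \<open>T1 = T2\<close> T2_def]]
          by simp
      next
        case False
        then have "\<not> (T1 = {} \<or> infinite S)" using fin by blast
        note IH = "1.IH"[OF T1_def this "1.prems"]
        have e1: "cs_loop r Y b1 S = cs_loop r Y b1 (S - T1)"
          by (rule cs_loop_step[of S b1 Y r, OF fin False[unfolded T1_def], folded T1_def])
        have e2: "cs_loop r Y b2 S = cs_loop r Y b2 (S - T1)"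
          by (rule cs_loop_step[of S b2 Y r, OF fin False[unfolded \<open>T1 = T2\<close> T2_def],
                folded T2_def \<open>T1 = T2\<close>])
        show ?thesis
          unfolding e1 e2 using IH Diff_subset[of S T1] by (meson order_trans)
      qed
    next
      case 2
      then have "v (S \<union> Y) < r / card S" "i \<in> S" using "1.prems"(2) unfolding T1_def by auto
      then show ?thesis using cs_loop_subset[of r Y b2 S] by blast
    next
      case 3
      then have "T2 \<noteq> {}" by blast
      then have "cs_loop r Y b2 S = cs_loop r Y b2 (S - T2)"
        using cs_loop_step[of S b2 Y r, OF fin] unfolding T2_def by blast
      then show ?thesis using cs_loop_subset[of r Y b2 "S - T2"] 3 by blast
    qed
  qed
qed

definition cs_utility :: "real \<Rightarrow> nat set \<Rightarrow> profile \<Rightarrow> nat set \<Rightarrow> nat \<Rightarrow> (nat set \<Rightarrow> real) \<Rightarrow> real" where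
  "cs_utility r Y b S i v =
     (let F = cs_loop r Y b S in if i \<in> F then v (Y \<union> F) - r / card F else 0)"

lemma cs_utility_truthful_nonneg:
  assumes "finite S"
  shows "0 \<le> cs_utility r Y (b(i := v)) S i v"
  using cs_loop_bid_ge_share[OF assms, of i r Y "b(i := v)"]
  by (auto simp: cs_utility_def Let_def Un_commute)

lemma cs_utility_truthful:
  assumes val: "valuation n i v" and fin: "finite S" and sub: "S \<union> Y \<subseteq> {1..n}"
  shows "cs_utility r Y (b(i := w)) S i v \<le> cs_utility r Y (b(i := v)) S i v"
proof -
  define F where "F = cs_loop r Y (b(i := w)) S"
  have nonneg: "0 \<le> cs_utility r Y (b(i := v)) S i v"
    using cs_utility_truthful_nonneg[OF fin] .
  have "cs_loop r Y (b(i := v)) S = F \<or> i \<notin> F \<or>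
      (\<exists>S'. F \<subseteq> S' \<and> S' \<subseteq> S \<and> i \<in> S' \<and> v (S' \<union> Y) < r / card S')"
    unfolding F_def by (rule cs_loop_deviation) auto
  then consider "cs_loop r Y (b(i := v)) S = F" | "i \<notin> F"
    | S' where "F \<subseteq> S'" "S' \<subseteq> S" "i \<in> F" "v (S' \<union> Y) < r / card S'"
    by blast
  then show ?thesis
  proof cases
    case 1
    then show ?thesis by (simp add: cs_utility_def F_def)
  next
    case 2
    then show ?thesis using nonneg by (simp add: cs_utility_def F_def[symmetric])
  next
    case 3
    have "finite S'" using fin 3(2) finite_subset by blast
    then have card_F: "0 < card F" "card F \<le> card S'"
      using 3(1,3) finite_subset[OF 3(1)] by (auto simp: card_gt_0_iff card_mono)
    have "Y \<union> F \<subseteq> S' \<union> Y" "S' \<union> Y \<subseteq> {1..n}" using 3(1,2) sub by auto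
    then have mono: "v (Y \<union> F) \<le> v (S' \<union> Y)" and "0 \<le> v (S' \<union> Y)"
      using val by (simp_all add: valuation_def)
    then have "0 < r / card S'" using 3(4) by linarith
    then have "0 < r" by (simp add: zero_less_divide_iff)
    then have "r / card S' \<le> r / card F" using card_F by (intro divide_left_mono) auto
    with mono have "cs_utility r Y (b(i := w)) S i v < 0"
      using 3(3,4) by (simp add: cs_utility_def F_def[symmetric])
    then show ?thesis using nonneg by linarith
  qed
qed

lemma r_X_cong:
  assumes "\<forall>j\<in>C. b1 j = b2 j"
  shows "r_X b1 X C = r_X b2 X C"
proof -
  have "(\<forall>j\<in>T. b1 j (T \<union> X) \<ge> c) \<longleftrightarrow> (\<forall>j\<in>T. b2 j (T \<union> X) \<ge> c)" if "T \<subseteq> C" for c T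
    using that assms by (intro ball_cong) auto
  then show ?thesis unfolding r_X_def by (intro arg_cong[where f=Sup]) blast
qed

lemma det_mech_cong:
  assumes "\<forall>j \<in> part_set n \<sigma> PB \<union> part_set n \<sigma> PC. b1 j = b2 j"
  shows "det_mech n \<sigma> b1 = det_mech n \<sigma> b2"
proof -
  let ?A = "part_set n \<sigma> PA" and ?B = "part_set n \<sigma> PB" and ?C = "part_set n \<sigma> PC"
  have "r_X b1 X ?C = r_X b2 X ?C" for X
    by (rule r_X_cong) (use assms in blast)
  then have r: "r_C b1 ?A ?B ?C = r_C b2 ?A ?B ?C" unfolding r_C_def by simp
  have cs: "cs_loop r ?A b1 ?B = cs_loop r ?A b2 ?B" for r
    by (rule cs_loop_cong) (use assms in blast)
  show ?thesis unfolding det_mech_def Let_def r cs ..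
qed

lemma det_mech_winners: "fst (det_mech n \<sigma> b) \<subseteq> part_set n \<sigma> PA \<union> part_set n \<sigma> PB"
  using cs_loop_subset[of _ "part_set n \<sigma> PA" b "part_set n \<sigma> PB"]
  unfolding det_mech_def Let_def by auto

lemma utility_det_mech_PB:
  assumes "\<sigma> i = PB"
  shows "utility i v (det_mech n \<sigma> b) =
    cs_utility (r_C b (part_set n \<sigma> PA) (part_set n \<sigma> PB) (part_set n \<sigma> PC))
      (part_set n \<sigma> PA) b (part_set n \<sigma> PB) i v"
proof -
  have "i \<notin> part_set n \<sigma> PA" using assms by (simp add: part_set_def)
  then show ?thesis unfolding det_mech_def utility_def cs_utility_def Let_def by auto
qed

lemma det_mech_truthful: "truthful n (det_mech n \<sigma>)"
  unfolding truthful_def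
proof (intro ballI allI impI)
  fix i v b w
  assume "i \<in> {1..n}" and "valuation n i v \<and> (\<forall>j\<in>{1..n}. valid_bid n (b j)) \<and> valid_bid n w"
  then have val: "valuation n i v" by simp
  show "utility i v (det_mech n \<sigma> (b(i := w))) \<le> utility i v (det_mech n \<sigma> (b(i := v)))"
  proof (cases "\<sigma> i")
    case PA
    then have "det_mech n \<sigma> (b(i := w)) = det_mech n \<sigma> (b(i := v))"
      by (intro det_mech_cong) (auto simp: part_set_def)
    then show ?thesis by simp
  next
    case PC
    then have "i \<notin> fst (det_mech n \<sigma> b')" for b'
      using det_mech_winners[of n \<sigma> b'] by (auto simp: part_set_def)
    then show ?thesis by (simp add: utility_def)
  next
    case PB
    let ?A = "part_set n \<sigma> PA" and ?B = "part_set n \<sigma> PB" and ?C = "part_set n \<sigma> PC"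
    have "r_X (b(i := w)) X ?C = r_X (b(i := v)) X ?C" for X
      by (rule r_X_cong) (use PB in \<open>simp add: part_set_def\<close>)
    then have "r_C (b(i := w)) ?A ?B ?C = r_C (b(i := v)) ?A ?B ?C"
      unfolding r_C_def by simp
    moreover have "finite ?B" "?B \<union> ?A \<subseteq> {1..n}" by (auto simp: part_set_def)
    ultimately show ?thesis
      using cs_utility_truthful[OF val] by (simp add: utility_det_mech_PB[where \<sigma>=\<sigma> and i=i, OF PB])
  qed
qed

theorem lemma1:
  shows "universally_truthful n (mech_M n)"
  unfolding universally_truthful_def mech_M_def using det_mech_truthful by auto

end
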